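(* Let $X$ be a path-connected Hausdorff space and let $m,l\in X$. Then the lion has a strategy in $X$ for the starting points $m$ (man) and $l$ (lion).
   Context: For a topological space $X$ and $x\in X$, let $P_x(X)$ be the set of continuous maps $\gamma:[0,+\infty)\to X$ with $\gamma(0)=x$. For $\gamma\in P_x(X)$ and $t\ge 0$, write $\gamma_{<t}=\gamma|_{[0,t)}$ and $\gamma_{\le t}=\gamma|_{[0,t]}$. Given starting points $m$ (man) and $l$ (lion) in $X$, a strategy for the lion is a function $S:P_m(X)\to P_l(X)$ such that (i) for each $\alpha\in P_m(X)$ there exists $t\ge 0$ with $S(\alpha)(t)=\alpha(t)$; and (ii) (no-lookahead rule) whenever $\alpha,\alpha'\in P_m(X)$ and $t\ge0$ satisfy $\alpha_{<t}=\alpha'_{<t}$, then $S(\alpha)_{\le t}=S(\alpha')_{\le t}$. *)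

theory Defs
  imports "HOL-Analysis.Analysis"
begin

text \<open>P_x(X): continuous maps [0,+inf) -> X starting at x. A map is represented by a
  total function real => 'a; only its values on [0,+inf) matter.\<close>
definition paths_from :: "'a topology \<Rightarrow> 'a \<Rightarrow> (real \<Rightarrow> 'a) set" where
  "paths_from X x = {\<gamma>. continuous_map (top_of_set {0..}) X \<gamma> \<and> \<gamma> 0 = x}"

definition lion_strategy ::
  "'a topology \<Rightarrow> 'a \<Rightarrow> 'a \<Rightarrow> ((real \<Rightarrow> 'a) \<Rightarrow> (real \<Rightarrow> 'a)) \<Rightarrow> bool" where
  "lion_strategy X m l S \<longleftrightarrow>
     (\<forall>\<alpha>\<in>paths_from X m. S \<alpha> \<in> paths_from X l) \<and>
     (\<forall>\<alpha>\<in>paths_from X m. \<exists>t\<ge>0. S \<alpha> t = \<alpha> t) \<and>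
     (\<forall>\<alpha>\<in>paths_from X m. \<forall>\<alpha>'\<in>paths_from X m. \<forall>t\<ge>0.
        (\<forall>s\<in>{0..<t}. \<alpha> s = \<alpha>' s) \<longrightarrow> (\<forall>s\<in>{0..t}. S \<alpha> s = S \<alpha>' s))"

end

theory Submission
  imports Defs
begin

text \<open>During [0,1] the lion walks along a path from l to m, so at time 1 it stands where the
  man started. Afterwards it replays the man's path at the reparametrised time
  min t (2t - 2): it lags behind until time 2 and from then on coincides with the man.
  The lag makes the strategy non-anticipating; at times t \<ge> 2 the lion uses the man's
  present position, which is determined by his past by continuity since X is Hausdorff.\<close>

definition delayed_chase :: "(real \<Rightarrow> 'a) \<Rightarrow> (real \<Rightarrow> 'a) \<Rightarrow> real \<Rightarrow> 'a" where
  "delayed_chase p \<alpha> t = (if t \<le> 1 then p t else \<alpha> (min t (2 * t - 2)))"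

lemma continuous_map_eq_at_right_end:
  assumes "Hausdorff_space X"
    and "continuous_map (top_of_set {0..}) X \<alpha>" "continuous_map (top_of_set {0..}) X \<beta>"
    and "\<forall>s\<in>{0..<t}. \<alpha> s = \<beta> s" and "(t::real) > 0"
  shows "\<alpha> t = \<beta> t"
proof (rule forall_in_closure_of_eq[OF _ assms(1-3)])
  have "{0..} \<inter> {0..<t} = {0..<t}" by auto
  then show "t \<in> top_of_set {0..} closure_of {0..<t}"
    using \<open>t > 0\<close> by (simp add: closure_of_subtopology closure_atLeastLessThan)
qed (use assms(4) in blast)

lemma delayed_chase_in_paths_from:
  assumes "pathin X p" "p 0 = l" "p 1 = m" and \<alpha>: "\<alpha> \<in> paths_from X m"
  shows "delayed_chase p \<alpha> \<in> paths_from X l"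
proof -
  have \<alpha>_cont: "continuous_map (top_of_set {0..}) X \<alpha>" and "\<alpha> 0 = m"
    using \<alpha> by (auto simp: paths_from_def)
  have on_unit: "{x. x \<in> topspace (top_of_set {0::real..}) \<and> id x \<le> 1} = {0..1}"
    and on_tail: "{x. x \<in> topspace (top_of_set {0::real..}) \<and> 1 \<le> id x} = {1..}"
    by auto
  have delay: "continuous_map (top_of_set {1..}) (top_of_set {0::real..}) (\<lambda>t. min t (2 * t - 2))"
    by (auto simp: continuous_map_in_subtopology intro!: continuous_intros)
  have "continuous_map (top_of_set {0..}) X
          (\<lambda>t. if id t \<le> 1 then p t else \<alpha> (min t (2 * t - 2)))"
  proof (rule continuous_map_cases_le)
    show "continuous_map (subtopology (top_of_set {0..})
            {x. x \<in> topspace (top_of_set {0..}) \<and> id x \<le> 1}) X p"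
      using assms(1) unfolding on_unit pathin_def by (simp add: subtopology_subtopology)
    show "continuous_map (subtopology (top_of_set {0..})
            {x. x \<in> topspace (top_of_set {0..}) \<and> 1 \<le> id x}) X (\<lambda>t. \<alpha> (min t (2 * t - 2)))"
      unfolding on_tail subtopology_subtopology
      using continuous_map_compose[OF delay \<alpha>_cont] by (simp add: o_def Int_absorb1)
  qed (use assms(3) \<open>\<alpha> 0 = m\<close> in auto)
  then show ?thesis
    using assms(2) by (simp add: paths_from_def delayed_chase_def[abs_def])
qed

lemma delayed_chase_catches: "delayed_chase p \<alpha> 2 = \<alpha> 2"
  by (simp add: delayed_chase_def)

lemma delayed_chase_no_lookahead:
  assumes "Hausdorff_space X" and \<alpha>: "\<alpha> \<in> paths_from X m" and \<alpha>': "\<alpha>' \<in> paths_from X m"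
    and agree: "\<forall>s\<in>{0..<t}. \<alpha> s = \<alpha>' s" and s: "s \<in> {0..t}"
  shows "delayed_chase p \<alpha> s = delayed_chase p \<alpha>' s"
proof (cases "s \<le> 1")
  case False
  define u where "u = min s (2 * s - 2)"
  have u: "0 \<le> u" "u \<le> t"
    using False s by (auto simp: u_def)
  have "\<alpha> u = \<alpha>' u"
  proof (cases "u < t")
    case False
    with u have "u = t" by simp
    with u \<open>\<not> s \<le> 1\<close> have "t > 0" by (auto simp: u_def)
    with \<alpha> \<alpha>' show ?thesis
      unfolding \<open>u = t\<close> paths_from_def
      by (auto intro: continuous_map_eq_at_right_end[OF assms(1) _ _ agree])
  qed (use agree u in auto)
  with False show ?thesis by (simp add: delayed_chase_def u_def)
qed (simp add: delayed_chase_def)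

theorem mainTheorem1:
  fixes X :: "'a topology" and m l :: 'a
  assumes "path_connected_space X" and "Hausdorff_space X"
    and "m \<in> topspace X" and "l \<in> topspace X"
  shows "\<exists>S. lion_strategy X m l S"
proof -
  obtain p where p: "pathin X p" "p 0 = l" "p 1 = m"
    using assms unfolding path_connected_space_def by blast
  have "lion_strategy X m l (delayed_chase p)"
    unfolding lion_strategy_def
  proof (intro conjI ballI allI impI)
    show "\<exists>t\<ge>0. delayed_chase p \<alpha> t = \<alpha> t" for \<alpha>
      using delayed_chase_catches by (intro exI[of _ 2]) auto
  qed (auto intro: delayed_chase_in_paths_from[OF p] delayed_chase_no_lookahead[OF assms(2)])
  then show ?thesis by blast
qed

end
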